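(* Let $E$ be a finite set and $\underline I=(I_\omega)_{\omega\in E}$ a family of non-empty finite sets. For any two causal orders $\Omega$ and $\Xi$ on $E$, $\Omega\le\Xi$ if and only if $\mathrm{ExtHist}(\Omega,\underline I)\supseteq\mathrm{ExtHist}(\Xi,\underline I)$.
   Context: A causal order $\Omega$ on $E$ is a preorder $\le_\Omega$ on $E$; $\Omega\le\Xi$ iff $\le_\Omega\subseteq\le_\Xi$. $\Lambda(\Omega)$ is the set of lowersets (subsets $U$ with $\xi\le_\Omega\omega\in U\Rightarrow\xi\in U$). $\mathrm{ExtHist}(\Omega,\underline I)=\bigcup_{U\in\Lambda(\Omega)}\prod_{\omega\in U}I_\omega$, i.e. all functions with domain a lowerset $U$ of $\Omega$ and values $f(\omega)\in I_\omega$. *)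

theory Defs
  imports Main
begin

text \<open>A causal order on E is a preorder on E, represented as a relation
  R \<subseteq> E \<times> E, where (x, y) \<in> R means x \<le> y.\<close>
definition causal_order :: "'e set \<Rightarrow> 'e rel \<Rightarrow> bool" where
  "causal_order E R \<longleftrightarrow> preorder_on E R"

definition lowersets :: "'e set \<Rightarrow> 'e rel \<Rightarrow> 'e set set" where
  "lowersets E R = {U. U \<subseteq> E \<and> (\<forall>x w. (x, w) \<in> R \<longrightarrow> w \<in> U \<longrightarrow> x \<in> U)}"

definition ExtHist :: "'e set \<Rightarrow> 'e rel \<Rightarrow> ('e \<Rightarrow> 'v set) \<Rightarrow> ('e \<rightharpoonup> 'v) set" where
  "ExtHist E R I = (\<Union>U\<in>lowersets E R.
      {f. dom f = U \<and> (\<forall>w\<in>U. the (f w) \<in> I w)})"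

end

theory Submission
  imports Defs
begin

text \<open>Since every \<open>I w\<close> is non-empty, the domains of the extended histories of a causal order
  are exactly its lowersets, so comparing extended histories means comparing lowersets.
  A preorder is in turn recovered from its lowersets through the principal lowersets
  \<open>{x. x \<le> w}\<close>, and inclusion of preorders reverses inclusion of lowersets.\<close>

lemma lowersets_antimono:
  assumes "R \<subseteq> S"
  shows "lowersets E S \<subseteq> lowersets E R"
  using assms unfolding lowersets_def by blast

lemma principal_lowerset_in_lowersets:
  assumes "R \<subseteq> E \<times> E" and "trans R"
  shows "{x. (x, w) \<in> R} \<in> lowersets E R"
  using assms unfolding lowersets_def by (auto dest: transD)

lemma subset_if_lowersets_subset:
  assumes "R \<subseteq> E \<times> E" and "preorder_on E S"
    and "lowersets E S \<subseteq> lowersets E R"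
  shows "R \<subseteq> S"
proof
  fix p assume "p \<in> R"
  then obtain x w where p: "p = (x, w)" and "(x, w) \<in> R" and "w \<in> E"
    using assms(1) by (cases p) auto
  have S: "S \<subseteq> E \<times> E" "refl_on E S" "trans S"
    using assms(2) unfolding preorder_on_def by auto
  let ?U = "{y. (y, w) \<in> S}"
  have "?U \<in> lowersets E R"
    using principal_lowerset_in_lowersets[OF S(1,3)] assms(3) by blast
  moreover have "w \<in> ?U"
    using S(2) \<open>w \<in> E\<close> unfolding refl_on_def by blast
  ultimately have "x \<in> ?U"
    using \<open>(x, w) \<in> R\<close> unfolding lowersets_def by blast
  then show "p \<in> S" using p by simp
qed

lemma lowersets_subset_iff:
  assumes "causal_order E R" and "causal_order E S"
  shows "lowersets E S \<subseteq> lowersets E R \<longleftrightarrow> R \<subseteq> S"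
proof
  show "R \<subseteq> S" if "lowersets E S \<subseteq> lowersets E R"
    using subset_if_lowersets_subset that assms
    unfolding causal_order_def preorder_on_def by blast
qed (rule lowersets_antimono)

lemma dom_ExtHist:
  assumes "\<And>w. w \<in> E \<Longrightarrow> I w \<noteq> {}"
  shows "dom ` ExtHist E R I = lowersets E R"
proof
  show "dom ` ExtHist E R I \<subseteq> lowersets E R"
    unfolding ExtHist_def by auto
next
  show "lowersets E R \<subseteq> dom ` ExtHist E R I"
  proof
    fix U assume U: "U \<in> lowersets E R"
    define f where "f = (\<lambda>y. Some (SOME v. v \<in> I y)) |` U"
    have "dom f = U" unfolding f_def by simp
    moreover have "the (f y) \<in> I y" if "y \<in> U" for y
    proof -
      have "y \<in> E" using that U unfolding lowersets_def by blast
      then have "I y \<noteq> {}" using assms by blast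
      then show ?thesis using that unfolding f_def by (simp add: some_in_eq)
    qed
    ultimately show "U \<in> dom ` ExtHist E R I"
      using U unfolding ExtHist_def by blast
  qed
qed

lemma ExtHist_subset_iff_lowersets_subset:
  assumes "\<And>w. w \<in> E \<Longrightarrow> I w \<noteq> {}"
  shows "ExtHist E S I \<subseteq> ExtHist E R I \<longleftrightarrow> lowersets E S \<subseteq> lowersets E R"
proof
  assume "ExtHist E S I \<subseteq> ExtHist E R I"
  then have "dom ` ExtHist E S I \<subseteq> dom ` ExtHist E R I" by (rule image_mono)
  then show "lowersets E S \<subseteq> lowersets E R"
    by (simp only: dom_ExtHist[OF assms])
next
  assume "lowersets E S \<subseteq> lowersets E R"
  then show "ExtHist E S I \<subseteq> ExtHist E R I"
    unfolding ExtHist_def by (rule UN_mono) simp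
qed

theorem proposition5:
  fixes E :: "'e set" and I :: "'e \<Rightarrow> 'v set" and \<Omega> \<Xi> :: "'e rel"
  assumes "finite E"
    and "\<And>w. w \<in> E \<Longrightarrow> finite (I w) \<and> I w \<noteq> {}"
    and "causal_order E \<Omega>" and "causal_order E \<Xi>"
  shows "\<Omega> \<subseteq> \<Xi> \<longleftrightarrow> ExtHist E \<Xi> I \<subseteq> ExtHist E \<Omega> I"
proof -
  have "ExtHist E \<Xi> I \<subseteq> ExtHist E \<Omega> I \<longleftrightarrow> lowersets E \<Xi> \<subseteq> lowersets E \<Omega>"
    using assms(2) by (intro ExtHist_subset_iff_lowersets_subset) blast
  also have "\<dots> \<longleftrightarrow> \<Omega> \<subseteq> \<Xi>"
    by (rule lowersets_subset_iff[OF assms(3,4)])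
  finally show ?thesis by (rule sym)
qed

end
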